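(* $$\int_{0}^{1}\frac{\left(\pi^3-12\pi\log^2x\right)\tanh^{-1}(x)}{x\left(4\log^2x+\pi^2\right)^3}\,dx=\frac{2C-1}{16\pi},$$ where $C=\sum_{n\ge0}\frac{(-1)^n}{(2n+1)^2}$ is Catalan's constant. *)

theory Defs
  imports "HOL-Analysis.Analysis"
begin

definition catalan :: real where
  "catalan = (\<Sum>n. (-1) ^ n / (2 * real n + 1)^2)"

end

theory Submission
  imports Defs "HOL-Real_Asymp.Real_Asymp"
begin

text \<open>
  For \<open>0 < x < 1\<close> the Laplace transform of \<open>s\<^sup>2 cos (2 s ln x)\<close> at \<open>pi\<close> equals
  \<open>2 (pi\<^sup>3 - 12 pi ln\<^sup>2 x) / (4 ln\<^sup>2 x + pi\<^sup>2)\<^sup>3\<close>, so the integral is a double integral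
  over \<open>(0, 1) \<times> (0, \<infinity>)\<close> of \<open>s\<^sup>2 exp (- pi s) cos (2 s ln x) artanh x / (2 x)\<close>.
  Integrating in \<open>x\<close> first, termwise in \<open>artanh x / x = \<Sum> x^(2 n) / (2 n + 1)\<close>, gives
  \<open>\<Sum> 1 / ((2 n + 1)\<^sup>2 + 4 s\<^sup>2) = pi tanh (pi s) / (8 s)\<close>, a partial fraction expansion
  that follows from the reflection formula for the digamma function. What remains is
  \<open>pi / 16\<close> times the integral of \<open>s exp (- pi s) tanh (pi s)\<close>; expanding
  \<open>exp (- t) tanh t = \<Sum> (-1)\<^sup>n (exp (- (2 n + 1) t) - exp (- (2 n + 3) t))\<close> and integrating
  termwise leaves \<open>\<Sum> (-1)\<^sup>n (1 / (2 n + 1)\<^sup>2 - 1 / (2 n + 3)\<^sup>2) / pi\<^sup>2 = (2 C - 1) / pi\<^sup>2\<close>.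
\<close>

lemma tendsto_at_right_0_ereal_comp:
  fixes F :: "real \<Rightarrow> real"
  assumes "isCont F 0"
  shows "((F \<circ> real_of_ereal) \<longlongrightarrow> F 0) (at_right (0::ereal))"
proof -
  have "(F \<longlongrightarrow> F 0) (at_right 0)"
    using assms unfolding isCont_def by (rule tendsto_within_subset) simp
  then show ?thesis
    unfolding zero_ereal_def ereal_tendsto_simps .
qed

lemma einterval_0_infty: "einterval 0 \<infinity> = {0::real<..}"
  by (simp add: zero_ereal_def)

lemma set_integral_Ioi_FTC_nonneg:
  fixes f F :: "real \<Rightarrow> real"
  assumes deriv: "\<And>s. (F has_real_derivative f s) (at s)"
    and cont: "\<And>s. isCont f s"
    and nonneg: "\<And>s. s > 0 \<Longrightarrow> f s \<ge> 0"
    and lim: "(F \<longlongrightarrow> 0) at_top"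
  shows "set_integrable lborel {0<..} f" "(LBINT s:{0<..}. f s) = - F 0"
proof -
  have "((F \<circ> real_of_ereal) \<longlongrightarrow> 0) (at_left \<infinity>)"
    using lim unfolding ereal_tendsto_simps .
  note FTC = interval_integral_FTC_nonneg[where a = 0 and b = \<infinity>, OF _ deriv cont _
      tendsto_at_right_0_ereal_comp[OF DERIV_isCont[OF deriv]] this]
  show "set_integrable lborel {0<..} f" "(LBINT s:{0<..}. f s) = - F 0"
    using FTC nonneg by (simp_all add: interval_lebesgue_integral_0_infty einterval_0_infty)
qed

lemma set_integral_Ioi_FTC:
  fixes f F :: "real \<Rightarrow> real"
  assumes deriv: "\<And>s. (F has_real_derivative f s) (at s)"
    and cont: "\<And>s. isCont f s"
    and integrable: "set_integrable lborel {0<..} f"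
    and lim: "(F \<longlongrightarrow> 0) at_top"
  shows "(LBINT s:{0<..}. f s) = - F 0"
proof -
  have "((F \<circ> real_of_ereal) \<longlongrightarrow> 0) (at_left \<infinity>)"
    using lim unfolding ereal_tendsto_simps .
  from interval_integral_FTC_integrable[where a = 0 and b = \<infinity>, OF _ _ cont _
      tendsto_at_right_0_ereal_comp[OF DERIV_isCont[OF deriv]] this]
  show ?thesis
    using deriv integrable
    by (simp add: interval_lebesgue_integral_0_infty einterval_0_infty
        has_real_derivative_iff_has_vector_derivative[symmetric])
qed

lemma laplace_x_exp:
  fixes c :: real assumes "c > 0"
  shows "set_integrable lborel {0<..} (\<lambda>s. s * exp (- (c * s)))"
    and "(LBINT s:{0<..}. s * exp (- (c * s))) = 1 / c^2"
proof -
  let ?F = "\<lambda>s::real. - exp (- (c * s)) * (s / c + 1 / c^2)"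
  have D: "(?F has_real_derivative s * exp (- (c * s))) (at s)" for s
    using assms by (auto intro!: derivative_eq_intros simp: field_simps power2_eq_square)
  have L: "(?F \<longlongrightarrow> 0) at_top"
    using assms by real_asymp
  show "set_integrable lborel {0<..} (\<lambda>s. s * exp (- (c * s)))"
    by (rule set_integral_Ioi_FTC_nonneg(1)[OF D _ _ L]) (auto intro: continuous_intros)
  show "(LBINT s:{0<..}. s * exp (- (c * s))) = 1 / c^2"
    by (subst set_integral_Ioi_FTC_nonneg(2)[OF D _ _ L]) (auto intro: continuous_intros)
qed

lemma laplace_x2_exp:
  fixes c :: real assumes "c > 0"
  shows "set_integrable lborel {0<..} (\<lambda>s. s^2 * exp (- (c * s)))"
    and "(LBINT s:{0<..}. s^2 * exp (- (c * s))) = 2 / c^3"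
proof -
  let ?F = "\<lambda>s::real. - exp (- (c * s)) * (s^2 / c + 2 * s / c^2 + 2 / c^3)"
  have D: "(?F has_real_derivative s^2 * exp (- (c * s))) (at s)" for s
    using assms by (auto intro!: derivative_eq_intros
        simp: field_simps power2_eq_square power3_eq_cube)
  have L: "(?F \<longlongrightarrow> 0) at_top"
    using assms by real_asymp
  show "set_integrable lborel {0<..} (\<lambda>s. s^2 * exp (- (c * s)))"
    by (rule set_integral_Ioi_FTC_nonneg(1)[OF D _ _ L]) (auto intro: continuous_intros)
  show "(LBINT s:{0<..}. s^2 * exp (- (c * s))) = 2 / c^3"
    by (subst set_integral_Ioi_FTC_nonneg(2)[OF D _ _ L]) (auto intro: continuous_intros)
qed

lemma exp_cos_sin_quadratic_tendsto_0:
  fixes c :: real assumes "c > 0"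
  shows "((\<lambda>s. exp (- (c * s)) * (cos (b * s) * (p2 * s^2 + p1 * s + p0) -
           sin (b * s) * (q2 * s^2 + q1 * s + q0))) \<longlongrightarrow> 0) at_top"
proof (rule Lim_null_comparison)
  let ?P = "\<lambda>s. exp (- (c * s)) * (p2 * s^2 + p1 * s + p0)"
  let ?Q = "\<lambda>s. exp (- (c * s)) * (q2 * s^2 + q1 * s + q0)"
  have "norm (exp (- (c * s)) * (cos (b * s) * (p2 * s^2 + p1 * s + p0) -
      sin (b * s) * (q2 * s^2 + q1 * s + q0))) = \<bar>cos (b * s) * ?P s - sin (b * s) * ?Q s\<bar>" for s
    by (simp add: algebra_simps)
  also have "\<dots> s \<le> \<bar>cos (b * s)\<bar> * \<bar>?P s\<bar> + \<bar>sin (b * s)\<bar> * \<bar>?Q s\<bar>" for s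
    using abs_triangle_ineq4[of "cos (b * s) * ?P s" "sin (b * s) * ?Q s"] by (simp only: abs_mult)
  also have "\<dots> s \<le> \<bar>?P s\<bar> + \<bar>?Q s\<bar>" for s
    by (intro add_mono mult_left_le_one_le) auto
  finally show "\<forall>\<^sub>F s in at_top. norm (exp (- (c * s)) * (cos (b * s) * (p2 * s^2 + p1 * s + p0) -
      sin (b * s) * (q2 * s^2 + q1 * s + q0))) \<le> \<bar>?P s\<bar> + \<bar>?Q s\<bar>"
    by (intro always_eventually allI)
  have "(?P \<longlongrightarrow> 0) at_top" "(?Q \<longlongrightarrow> 0) at_top"
    using assms by real_asymp+
  then show "((\<lambda>s. \<bar>?P s\<bar> + \<bar>?Q s\<bar>) \<longlongrightarrow> 0) at_top"
    by (intro tendsto_add_zero tendsto_rabs_zero)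
qed

lemma laplace_x2_exp_cos:
  fixes b c :: real assumes c: "c > 0"
  shows "set_integrable lborel {0<..} (\<lambda>s. s^2 * exp (- (c * s)) * cos (b * s))"
    and "(LBINT s:{0<..}. s^2 * exp (- (c * s)) * cos (b * s)) =
           2 * (c^3 - 3 * c * b^2) / (c^2 + b^2)^3"
proof -
  show integrable: "set_integrable lborel {0<..} (\<lambda>s. s^2 * exp (- (c * s)) * cos (b * s))"
    by (rule set_integrable_bound[OF laplace_x2_exp(1)[OF c]])
      (auto simp: set_borel_measurable_def abs_mult intro!: AE_I2 mult_left_le)
  define D where "D = c^2 + b^2"
  have "D > 0"
    using c by (simp add: D_def add_pos_nonneg)
  \<comment> \<open>\<open>F\<close> is the real part of the antiderivative \<open>- exp (- w s) (s\<^sup>2 / w + 2 s / w\<^sup>2 + 2 / w\<^sup>3)\<close>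
      of \<open>s\<^sup>2 exp (- w s)\<close>, where \<open>w = c - i b\<close>.\<close>
  define P where "P s = c / D * s^2 + 2 * (c^2 - b^2) / D^2 * s + 2 * (c^3 - 3 * c * b^2) / D^3"
    for s :: real
  define Q where "Q s = b / D * s^2 + 4 * c * b / D^2 * s + 2 * (3 * c^2 * b - b^3) / D^3"
    for s :: real
  define F where "F s = - exp (- (c * s)) * (cos (b * s) * P s - sin (b * s) * Q s)" for s :: real
  have P_deriv: "(P has_real_derivative 2 * c / D * s + 2 * (c^2 - b^2) / D^2) (at s)" for s
    using \<open>D > 0\<close> unfolding P_def
    by (auto intro!: derivative_eq_intros simp: field_simps power2_eq_square)
  have Q_deriv: "(Q has_real_derivative 2 * b / D * s + 4 * c * b / D^2) (at s)" for s
    using \<open>D > 0\<close> unfolding Q_def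
    by (auto intro!: derivative_eq_intros simp: field_simps power2_eq_square)
  have cos_coeff: "c * P s + b * Q s - (2 * c / D * s + 2 * (c^2 - b^2) / D^2) = s^2" for s
    using \<open>D > 0\<close> unfolding P_def Q_def by (simp add: field_simps, unfold D_def, algebra)
  have sin_coeff: "b * P s - c * Q s + (2 * b / D * s + 4 * c * b / D^2) = 0" for s
    using \<open>D > 0\<close> unfolding P_def Q_def by (simp add: field_simps, unfold D_def, algebra)
  have F_deriv: "(F has_real_derivative s^2 * exp (- (c * s)) * cos (b * s)) (at s)" for s
  proof -
    have "(F has_real_derivative exp (- (c * s)) *
        (cos (b * s) * (c * P s + b * Q s - (2 * c / D * s + 2 * (c^2 - b^2) / D^2)) +
         sin (b * s) * (b * P s - c * Q s + (2 * b / D * s + 4 * c * b / D^2)))) (at s)"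
      unfolding F_def by (auto intro!: derivative_eq_intros P_deriv Q_deriv simp: algebra_simps)
    then show ?thesis
      unfolding cos_coeff sin_coeff by (simp add: mult_ac)
  qed
  have "(F \<longlongrightarrow> 0) at_top"
    unfolding F_def P_def Q_def mult_minus_left
    by (rule tendsto_minus[where a = 0, simplified]) (rule exp_cos_sin_quadratic_tendsto_0[OF c])
  from set_integral_Ioi_FTC[OF F_deriv _ integrable this]
  show "(LBINT s:{0<..}. s^2 * exp (- (c * s)) * cos (b * s)) =
      2 * (c^3 - 3 * c * b^2) / (c^2 + b^2)^3"
    by (simp add: F_def P_def D_def minus_divide_left)
qed

lemma power_cos_sin_ln_tendsto_0:
  fixes u v b :: real
  shows "((\<lambda>x. x^Suc k * (u * cos (b * ln x) + v * sin (b * ln x))) \<longlongrightarrow> 0) (at_right 0)"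
proof (rule Lim_null_comparison)
  show "\<forall>\<^sub>F x in at_right 0. norm (x^Suc k * (u * cos (b * ln x) + v * sin (b * ln x))) \<le>
      x^Suc k * (\<bar>u\<bar> + \<bar>v\<bar>)"
    using eventually_at_right_less[of "0::real"]
  proof (rule eventually_mono)
    fix x :: real assume "0 < x"
    have "\<bar>u * cos (b * ln x) + v * sin (b * ln x)\<bar> \<le> \<bar>u * cos (b * ln x)\<bar> + \<bar>v * sin (b * ln x)\<bar>"
      by (rule abs_triangle_ineq)
    also have "\<dots> \<le> \<bar>u\<bar> + \<bar>v\<bar>"
      unfolding abs_mult by (intro add_mono mult_right_le_one_le) auto
    finally show "norm (x^Suc k * (u * cos (b * ln x) + v * sin (b * ln x)))
          \<le> x^Suc k * (\<bar>u\<bar> + \<bar>v\<bar>)"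
      using \<open>0 < x\<close> by (simp add: abs_mult mult_left_mono)
  qed
  show "((\<lambda>x. x^Suc k * (\<bar>u\<bar> + \<bar>v\<bar>)) \<longlongrightarrow> 0) (at_right 0)"
    by (auto intro!: tendsto_eq_intros)
qed

lemma integral_power_cos_ln:
  fixes b :: real and k :: nat
  shows "set_integrable lborel {0<..<1} (\<lambda>x. x^k * cos (b * ln x))"
    and "(LBINT x:{0<..<1}. x^k * cos (b * ln x)) = (real k + 1) / ((real k + 1)^2 + b^2)"
proof -
  show integrable: "set_integrable lborel {0<..<1} (\<lambda>x. x^k * cos (b * ln x))"
  proof (rule set_integrable_bound)
    show "set_integrable lborel {0<..<1::real} (\<lambda>_. 1::real)"
      by (simp add: set_integrable_def integrable_indicator_iff)
    show "AE x in lborel. x \<in> {0<..<1} \<longrightarrow> norm (x^k * cos (b * ln x)) \<le> norm (1::real)"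
      by (intro AE_I2) (auto simp: abs_mult power_le_one intro!: mult_le_one)
  qed (simp add: set_borel_measurable_def)
  define m where "m = real k + 1"
  define M where "M = m^2 + b^2"
  have "M > 0"
    by (simp add: m_def M_def add_pos_nonneg)
  define G where "G x = x^Suc k * (m * cos (b * ln x) + b * sin (b * ln x)) / M" for x :: real
  have G_deriv: "(G has_real_derivative x^k * cos (b * ln x)) (at x)" if "x > 0" for x
    using that \<open>M > 0\<close> unfolding G_def
    by (auto intro!: derivative_eq_intros simp: field_simps)
       (cases k; simp add: M_def m_def algebra_simps power2_eq_square)
  have "((G \<circ> real_of_ereal) \<longlongrightarrow> 0) (at_right 0)"
    using tendsto_divide_zero[OF power_cos_sin_ln_tendsto_0, of k m b b M]
    unfolding zero_ereal_def ereal_tendsto_simps G_def .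
  moreover have "((G \<circ> real_of_ereal) \<longlongrightarrow> m / M) (at_left 1)"
  proof -
    have "(G \<longlongrightarrow> G 1) (at_left 1)"
      using \<open>M > 0\<close> unfolding G_def by (intro tendsto_intros) auto
    then show ?thesis
      unfolding one_ereal_def ereal_tendsto_simps by (simp add: G_def)
  qed
  ultimately have "(LBINT x=0..1. x^k * cos (b * ln x)) = m / M - 0"
    by (intro interval_integral_FTC_integrable)
      (use integrable G_deriv in \<open>auto simp:
         has_real_derivative_iff_has_vector_derivative[symmetric]
         zero_ereal_def one_ereal_def intro!: continuous_intros\<close>)
  then show "(LBINT x:{0<..<1}. x^k * cos (b * ln x)) = (real k + 1) / ((real k + 1)^2 + b^2)"
    by (simp add: interval_integral_Ioo zero_ereal_def one_ereal_def M_def m_def)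
qed

lemma set_integral_sums:
  fixes f :: "nat \<Rightarrow> 'a \<Rightarrow> real"
  assumes integrable: "\<And>n. set_integrable M A (f n)"
    and sums: "\<And>x. x \<in> A \<Longrightarrow> (\<lambda>n. f n x) sums g x"
    and abs_summable: "\<And>x. x \<in> A \<Longrightarrow> summable (\<lambda>n. norm (f n x))"
    and integral_bound: "\<And>n. (LINT x:A|M. norm (f n x)) \<le> c n"
    and summable_bound: "summable c"
  shows "set_integrable M A g" and "(\<lambda>n. LINT x:A|M. f n x) sums (LINT x:A|M. g x)"
proof -
  define F where "F n x = indicator A x * f n x" for n x
  have F_integrable: "integrable M (F n)" for n
    using integrable unfolding set_integrable_def F_def by simp
  have "(\<lambda>n. F n x) sums (indicator A x * g x)" for x
    by (cases "x \<in> A") (simp_all add: F_def sums sums_mult)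
  then have F_suminf: "(\<lambda>x. \<Sum>n. F n x) = (\<lambda>x. indicator A x * g x)"
    by (simp add: sums_iff)
  have F_abs_summable: "AE x in M. summable (\<lambda>n. norm (F n x))"
    using abs_summable by (intro AE_I2) (auto simp: F_def split: split_indicator)
  have "(\<integral>x. norm (F n x) \<partial>M) = (LINT x:A|M. norm (f n x))" for n
    unfolding set_lebesgue_integral_def F_def
    by (rule Bochner_Integration.integral_cong) (auto split: split_indicator)
  moreover have "(LINT x:A|M. norm (f n x)) \<ge> 0" for n
    unfolding set_lebesgue_integral_def by (intro integral_nonneg_AE) auto
  ultimately have "summable (\<lambda>n. \<integral>x. norm (F n x) \<partial>M)"
    using integral_bound
    by (intro summable_comparison_test[OF _ summable_bound]) (auto intro!: exI[of _ 0])
  note termwise = integrable_suminf[OF F_integrable F_abs_summable this]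
    sums_integral[OF F_integrable F_abs_summable this]
  show "set_integrable M A g" "(\<lambda>n. LINT x:A|M. f n x) sums (LINT x:A|M. g x)"
    using termwise unfolding F_suminf
      by (simp_all add: set_integrable_def set_lebesgue_integral_def F_def)
qed

lemma artanh_div_sums:
  fixes x :: real assumes "\<bar>x\<bar> < 1" "x \<noteq> 0"
  shows "(\<lambda>n. x^(2*n) / (2 * real n + 1)) sums (artanh x / x)"
proof -
  define X where "X = (1 + x) / (1 - x)"
  have "X > 0" "(X - 1) / (X + 1) = x"
    using assms unfolding X_def by (auto simp: field_simps)
  with ln_series_quadratic[of X]
  have "(\<lambda>n. 2 * x^(2*n+1) / real (2*n+1)) sums ln X" by simp
  then have "(\<lambda>n. 2 * x^(2*n+1) / real (2*n+1) / (2 * x)) sums (ln X / (2 * x))"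
    by (rule sums_divide)
  then show ?thesis
    using assms by (simp add: artanh_def X_def add.commute)
qed

lemma summable_inverse_odd_squares: "summable (\<lambda>n. 1 / (2 * real n + 1)^2)"
proof (rule summable_comparison_test)
  show "summable (\<lambda>n. 1 / (real n + 1)^2)"
    using inverse_squares_sums by (simp add: sums_iff add.commute)
  show "\<exists>N. \<forall>n\<ge>N. norm (1 / (2 * real n + 1)^2) \<le> 1 / (real n + 1)^2"
    by (intro exI[of _ 0] allI impI) (simp add: divide_simps power_mono)
qed

lemma integral_abs_power_cos_ln_le:
  fixes b :: real and k :: nat
  shows "(LBINT x:{0<..<1}. \<bar>x^k * cos (b * ln x)\<bar>) \<le> 1 / (real k + 1)"
proof -
  have "(LBINT x:{0<..<1}. \<bar>x^k * cos (b * ln x)\<bar>) \<le> (LBINT x:{0<..<1}. x^k :: real)"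
  proof (rule set_integral_mono)
    show "set_integrable lborel {0<..<1} (\<lambda>x. \<bar>x^k * cos (b * ln x)\<bar>)"
      by (intro set_integrable_abs integral_power_cos_ln(1))
    show "set_integrable lborel {0<..<1} (\<lambda>x. x^k :: real)"
      using integral_power_cos_ln(1)[of k 0] by simp
  qed (auto simp: abs_mult intro: mult_left_le)
  also have "\<dots> = 1 / (real k + 1)"
    using integral_power_cos_ln(2)[of k 0] by (simp add: power2_eq_square)
  finally show ?thesis .
qed

lemma integral_cos_ln_artanh_div:
  fixes b :: real
  shows "set_integrable lborel {0<..<1} (\<lambda>x. cos (b * ln x) * (artanh x / x))"
    and "(\<lambda>n. 1 / ((2 * real n + 1)^2 + b^2)) sums
           (LBINT x:{0<..<1}. cos (b * ln x) * (artanh x / x))"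
proof -
  define f where "f n x = x^(2*n) * cos (b * ln x) / (2 * real n + 1)" for n and x :: real
  have f_integrable: "set_integrable lborel {0<..<1} (f n)" for n
    unfolding f_def by (intro set_integrable_divide integral_power_cos_ln(1))
  have f_bound: "\<bar>f n x\<bar> \<le> x^(2*n) / (2 * real n + 1)" if "x \<in> {0<..<1}" for n x
  proof -
    have "\<bar>f n x\<bar> = x^(2*n) * \<bar>cos (b * ln x)\<bar> / (2 * real n + 1)"
      using that by (simp add: f_def abs_mult)
    also have "\<dots> \<le> x^(2*n) / (2 * real n + 1)"
      using that by (intro divide_right_mono mult_left_le) auto
    finally show ?thesis .
  qed
  have f_abs_summable: "summable (\<lambda>n. norm (f n x))" if "x \<in> {0<..<1}" for x
  proof (rule summable_comparison_test)
    show "summable (\<lambda>n. x^(2*n) / (2 * real n + 1))"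
      using artanh_div_sums[of x] that by (auto simp: sums_iff)
    show "\<exists>N. \<forall>n\<ge>N. norm (norm (f n x)) \<le> x^(2*n) / (2 * real n + 1)"
      using f_bound[OF that] by simp
  qed
  have f_integral_bound: "(LBINT x:{0<..<1}. norm (f n x)) \<le> 1 / (2 * real n + 1)^2" for n
  proof -
    have "(LBINT x:{0<..<1}. norm (f n x)) =
        (LBINT x:{0<..<1}. \<bar>x^(2*n) * cos (b * ln x)\<bar>) / (2 * real n + 1)"
      by (simp add: f_def abs_mult)
    also have "\<dots> \<le> 1 / (2 * real n + 1)^2"
      using integral_abs_power_cos_ln_le[of "2 * n" b]
      by (simp add: divide_right_mono power2_eq_square flip: divide_divide_eq_left)
    finally show ?thesis .
  qed
  have "(\<lambda>n. f n x) sums (cos (b * ln x) * (artanh x / x))" if "x \<in> {0<..<1}" for x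
    using sums_mult[OF artanh_div_sums[of x], of "cos (b * ln x)"] that
    by (simp add: f_def mult_ac)
  note termwise = set_integral_sums[OF f_integrable this f_abs_summable f_integral_bound
      summable_inverse_odd_squares]
  show "set_integrable lborel {0<..<1} (\<lambda>x. cos (b * ln x) * (artanh x / x))"
    by (rule termwise(1))
  show "(\<lambda>n. 1 / ((2 * real n + 1)^2 + b^2)) sums
           (LBINT x:{0<..<1}. cos (b * ln x) * (artanh x / x))"
    using termwise(2) by (simp add: f_def integral_power_cos_ln(2) power2_eq_square)
qed

lemma tanh_of_real: "tanh (complex_of_real x) = complex_of_real (tanh x)"
  by (simp add: tanh_altdef flip: exp_of_real)

lemma Digamma_reflection_complex:
  fixes z :: complex
  assumes "z \<notin> \<int>"
  shows "Digamma (1 - z) - Digamma z = of_real pi * cot (of_real pi * z)"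
proof -
  have "z \<notin> \<int>\<^sub>\<le>\<^sub>0" "1 - z \<notin> \<int>\<^sub>\<le>\<^sub>0"
    using assms Ints_diff[of 1 "1 - z"] nonpos_Ints_subset_Ints by auto
  then have "((\<lambda>z. Gamma z * Gamma (1 - z)) has_field_derivative
      Gamma z * Gamma (1 - z) * (Digamma z - Digamma (1 - z))) (at z)"
    by (auto intro!: derivative_eq_intros simp: algebra_simps)
  moreover have sin_nonzero: "sin (of_real pi * z) \<noteq> 0"
  proof
    assume "sin (of_real pi * z) = 0"
    then obtain n :: int where "of_real pi * z = of_real (of_int n * pi)"
      by (auto simp: sin_eq_0)
    then have "z = of_int n"
      by (simp add: field_simps)
    with assms show False
      by simp
  qed
  then have "((\<lambda>z. Gamma z * Gamma (1 - z)) has_field_derivative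
      - of_real pi * (of_real pi * cos (of_real pi * z)) / (sin (of_real pi * z))^2) (at z)"
    unfolding Gamma_reflection_complex
    by (auto intro!: derivative_eq_intros simp: power2_eq_square)
  ultimately have "Gamma z * Gamma (1 - z) * (Digamma z - Digamma (1 - z)) =
      - of_real pi * (of_real pi * cos (of_real pi * z)) / (sin (of_real pi * z))^2"
    by (rule DERIV_unique)
  then have "of_real pi * sin (of_real pi * z) *
      (sin (of_real pi * z) * (Digamma (1 - z) - Digamma z)) =
      of_real pi * sin (of_real pi * z) * (of_real pi * cos (of_real pi * z))"
    using sin_nonzero by (simp add: Gamma_reflection_complex field_simps power2_eq_square)
  then have "sin (of_real pi * z) * (Digamma (1 - z) - Digamma z)
      = of_real pi * cos (of_real pi * z)"
    using sin_nonzero by simp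
  then show ?thesis
    using sin_nonzero by (simp add: cot_def field_simps)
qed

lemma cot_pi_half_plus_imaginary:
  "cot (of_real pi * (1/2 + \<i> * of_real s)) = - \<i> * of_real (tanh (pi * s))"
proof -
  have "cot (of_real pi * (1/2 + \<i> * of_real s)) = - tan (\<i> * of_real (pi * s))"
    by (simp add: cot_def tan_def algebra_simps cos_add sin_add)
  also have "\<dots> = - \<i> * of_real (tanh (pi * s))"
    unfolding tanh_of_real[symmetric] by (simp add: tanh_conv_tan)
  finally show ?thesis .
qed

lemma inverse_half_plus_imaginary_diff:
  fixes s :: real and k :: nat
  shows "inverse (1/2 + \<i> * of_real s + of_nat k) - inverse (1 - (1/2 + \<i> * of_real s) + of_nat k) =
    - \<i> * of_real (8 * s / ((2 * real k + 1)^2 + (2 * s)^2))"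
proof -
  define a where "a = real k + 1/2"
  have shifted: "1/2 + \<i> * of_real s + of_nat k = Complex a s"
      "1 - (1/2 + \<i> * of_real s) + of_nat k = Complex a (- s)"
    by (simp_all add: a_def complex_eq_iff)
  have denominator: "(2 * real k + 1)^2 + (2 * s)^2 = 4 * (a^2 + s^2)"
    by (simp add: a_def algebra_simps power2_eq_square)
  have "a^2 + s^2 > 0"
    by (simp add: a_def add_pos_nonneg)
  then show ?thesis
    unfolding shifted denominator
    by (simp add: complex_eq_iff inverse_complex_def power2_eq_square field_simps)
       (simp add: divide_eq_eq algebra_simps)
qed

lemma tanh_partial_fractions:
  fixes s :: real
  assumes "s \<noteq> 0"
  shows "(\<lambda>k. 1 / ((2 * real k + 1)^2 + (2 * s)^2)) sums (pi * tanh (pi * s) / (8 * s))"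
proof -
  define z :: complex where "z = 1/2 + \<i> * of_real s"
  have "z \<notin> \<int>"
    using assms by (auto simp: z_def elim!: Ints_cases dest: arg_cong[of _ _ Im])
  then have "z \<noteq> 0" "1 - z \<noteq> 0"
    by auto
  have "(\<lambda>k. inverse (z + of_nat k) - inverse (1 - z + of_nat k))
      sums (Digamma (1 - z) - Digamma z)"
    using sums_diff[OF summable_sums[OF summable_Digamma[OF \<open>1 - z \<noteq> 0\<close>]]
        summable_sums[OF summable_Digamma[OF \<open>z \<noteq> 0\<close>]]]
    by (simp add: Digamma_def)
  then have "(\<lambda>k. - \<i> * of_real (8 * s / ((2 * real k + 1)^2 + (2 * s)^2))) sums
      (of_real pi * (- \<i> * of_real (tanh (pi * s))))"
    unfolding Digamma_reflection_complex[OF \<open>z \<notin> \<int>\<close>]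
    unfolding z_def inverse_half_plus_imaginary_diff cot_pi_half_plus_imaginary .
  from sums_mult[OF this, of \<i>]
  have "(\<lambda>k. of_real (8 * s / ((2 * real k + 1)^2 + (2 * s)^2)) :: complex) sums
      of_real (pi * tanh (pi * s))"
    by (simp add: mult.left_commute)
  from sums_divide[OF this[unfolded sums_of_real_iff], of "8 * s"] show ?thesis
    using assms by simp
qed

lemma catalan_sums: "(\<lambda>n. (-1)^n / (2 * real n + 1)^2) sums catalan"
proof -
  have "summable (\<lambda>n. (-1)^n / (2 * real n + 1)^2)"
    by (rule summable_comparison_test[OF _ summable_inverse_odd_squares])
      (simp add: abs_mult power_abs)
  then show ?thesis
    unfolding catalan_def by (rule summable_sums)
qed

lemma catalan_telescoped_sums:
  "(\<lambda>n. (-1)^n * (1 / (2 * real n + 1)^2 - 1 / (2 * real n + 3)^2)) sums (2 * catalan - 1)"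
proof -
  have "(\<lambda>n. (-1)^Suc n / (2 * real (Suc n) + 1)^2) sums (catalan - 1)"
    using catalan_sums by (subst sums_Suc_iff) simp
  then have "(\<lambda>n. (-1)^n / (2 * real n + 3)^2) sums (1 - catalan)"
    using sums_minus by (fastforce simp: algebra_simps)
  from sums_diff[OF catalan_sums this] show ?thesis
    by (simp add: algebra_simps)
qed

definition exp_tanh_term :: "nat \<Rightarrow> real \<Rightarrow> real" where
  "exp_tanh_term n t = (-1)^n * (exp (- ((2 * real n + 1) * t)) - exp (- ((2 * real n + 3) * t)))"

lemma exp_tanh_term_sums:
  fixes t :: real assumes "t > 0"
  shows "(\<lambda>n. exp_tanh_term n t) sums (exp (- t) * tanh t)"
proof -
  define q where "q = exp (- 2 * t)"
  have "norm (- q) < 1"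
    using assms by (simp add: q_def)
  have exp_shift: "exp (- ((2 * real n + c) * t)) = exp (- (c * t)) * q^n" for n c
  proof -
    have "- ((2 * real n + c) * t) = - (c * t) + real n * (- 2 * t)"
      by (simp add: algebra_simps)
    then show ?thesis
      by (simp only: q_def exp_add exp_of_nat_mult)
  qed
  have "exp (- (3 * t)) = exp (- t) * q"
    by (simp add: q_def flip: exp_add)
  then have "exp_tanh_term n t = exp (- t) * (1 - q) * (- q)^n" for n
    unfolding exp_tanh_term_def exp_shift power_minus[of q] by (simp add: algebra_simps)
  moreover have "(\<lambda>n. exp (- t) * (1 - q) * (- q)^n) sums (exp (- t) * (1 - q) * (1 / (1 - - q)))"
    by (intro sums_mult geometric_sums \<open>norm (- q) < 1\<close>)
  moreover have "exp (- t) * (1 - q) * (1 / (1 - - q)) = exp (- t) * tanh t"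
    by (simp add: tanh_real_altdef q_def)
  ultimately show ?thesis
    by simp
qed

lemma abs_exp_tanh_term_le:
  fixes t :: real assumes "t \<ge> 0"
  shows "\<bar>exp_tanh_term n t\<bar> \<le> exp (- ((2 * real n + 1) * t))"
proof -
  have "exp (- ((2 * real n + 3) * t)) \<le> exp (- ((2 * real n + 1) * t))"
    using assms by (simp add: mult_right_mono)
  then show ?thesis
    by (simp add: exp_tanh_term_def abs_mult)
qed

lemma summable_abs_exp_tanh_term:
  fixes t :: real assumes "t > 0"
  shows "summable (\<lambda>n. \<bar>exp_tanh_term n t\<bar>)"
proof (rule summable_comparison_test)
  have "exp (- ((2 * real n + 1) * t)) = exp (- t) * exp (- 2 * t)^n" for n
    by (simp add: algebra_simps flip: exp_add exp_of_nat_mult)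
  moreover have "summable (\<lambda>n. exp (- t) * exp (- 2 * t)^n)"
    using assms by (intro summable_mult summable_geometric) simp
  ultimately show "summable (\<lambda>n. exp (- ((2 * real n + 1) * t)))"
    by simp
  show "\<exists>N. \<forall>n\<ge>N. norm \<bar>exp_tanh_term n t\<bar> \<le> exp (- ((2 * real n + 1) * t))"
    using abs_exp_tanh_term_le assms by simp
qed

lemma laplace_x_exp_tanh_term:
  fixes a :: real assumes "a > 0"
  shows "set_integrable lborel {0<..} (\<lambda>s. s * exp_tanh_term n (a * s))"
    and "(LBINT s:{0<..}. s * exp_tanh_term n (a * s)) =
           (-1)^n * (1 / (2 * real n + 1)^2 - 1 / (2 * real n + 3)^2) / a^2"
proof -
  define c where "c k = (2 * real n + k) * a" for k :: real
  have "c 1 > 0" "c 3 > 0"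
    using assms by (simp_all add: c_def)
  note laplace = laplace_x_exp[OF \<open>c 1 > 0\<close>] laplace_x_exp[OF \<open>c 3 > 0\<close>]
  have term_eq: "s * exp_tanh_term n (a * s) =
      (-1)^n * (s * exp (- (c 1 * s)) - s * exp (- (c 3 * s)))" for s
    by (simp add: exp_tanh_term_def c_def algebra_simps)
  show "set_integrable lborel {0<..} (\<lambda>s. s * exp_tanh_term n (a * s))"
    unfolding term_eq using laplace by (intro set_integrable_mult_right set_integral_diff) auto
  have "(LBINT s:{0<..}. s * exp_tanh_term n (a * s)) = (-1)^n * (1 / (c 1)^2 - 1 / (c 3)^2)"
    unfolding term_eq set_integral_mult_right using laplace by (simp add: set_integral_diff(2))
  also have "\<dots> = (-1)^n * (1 / (2 * real n + 1)^2 - 1 / (2 * real n + 3)^2) / a^2"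
    unfolding c_def power_mult_distrib
      by (simp add: divide_inverse inverse_mult_distrib algebra_simps)
  finally show "(LBINT s:{0<..}. s * exp_tanh_term n (a * s)) =
      (-1)^n * (1 / (2 * real n + 1)^2 - 1 / (2 * real n + 3)^2) / a^2" .
qed

lemma integral_x_exp_tanh:
  fixes a :: real assumes "a > 0"
  shows "set_integrable lborel {0<..} (\<lambda>s. s * (exp (- (a * s)) * tanh (a * s)))"
    and "(LBINT s:{0<..}. s * (exp (- (a * s)) * tanh (a * s))) = (2 * catalan - 1) / a^2"
proof -
  define f where "f n s = s * exp_tanh_term n (a * s)" for n s
  have f_integral_bound: "(LBINT s:{0<..}. norm (f n s)) \<le> 1 / (2 * real n + 1)^2 / a^2" for n
  proof -
    have "(LBINT s:{0<..}. norm (f n s)) \<le>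
        (LBINT s:{0<..}. s * exp (- (((2 * real n + 1) * a) * s)))"
    proof (rule set_integral_mono)
      show "set_integrable lborel {0<..} (\<lambda>s. norm (f n s))"
        using set_integrable_abs[OF laplace_x_exp_tanh_term(1)[OF assms]] by (simp add: f_def)
      show "set_integrable lborel {0<..} (\<lambda>s. s * exp (- (((2 * real n + 1) * a) * s)))"
        using assms by (intro laplace_x_exp(1)) simp
      show "norm (f n s) \<le> s * exp (- (((2 * real n + 1) * a) * s))" if "s \<in> {0<..}" for s
        using that assms abs_exp_tanh_term_le[of "a * s" n]
        by (simp add: f_def abs_mult mult_left_mono mult.assoc)
    qed
    also have "\<dots> = 1 / (2 * real n + 1)^2 / a^2"
      using assms by (subst laplace_x_exp(2)) (simp_all add: power_mult_distrib)
    finally show ?thesis .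
  qed
  have f_sums: "(\<lambda>n. f n s) sums (s * (exp (- (a * s)) * tanh (a * s)))" if "s \<in> {0<..}" for s
    unfolding f_def using that assms by (intro sums_mult exp_tanh_term_sums) simp
  have f_abs_summable: "summable (\<lambda>n. norm (f n s))" if "s \<in> {0<..}" for s
    using summable_mult[OF summable_abs_exp_tanh_term, of "a * s" s] that assms
    by (simp add: f_def abs_mult)
  note termwise = set_integral_sums[OF laplace_x_exp_tanh_term(1)[OF assms, folded f_def]
      f_sums f_abs_summable f_integral_bound summable_divide[OF summable_inverse_odd_squares]]
  show "set_integrable lborel {0<..} (\<lambda>s. s * (exp (- (a * s)) * tanh (a * s)))"
    by (rule termwise(1))
  have "(\<lambda>n. LBINT s:{0<..}. f n s) sums ((2 * catalan - 1) / a^2)"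
    unfolding f_def laplace_x_exp_tanh_term(2)[OF assms]
      by (intro sums_divide catalan_telescoped_sums)
  with termwise(2) show "(LBINT s:{0<..}. s * (exp (- (a * s)) * tanh (a * s)))
      = (2 * catalan - 1) / a^2"
    by (rule sums_unique2)
qed

definition double_integrand :: "real \<Rightarrow> real \<Rightarrow> real" where
  "double_integrand x s = indicator {0<..<1} x * (artanh x / x) / 2 *
     (indicator {0<..} s * (s^2 * exp (- (pi * s)) * cos (2 * ln x * s)))"

lemma double_integrand_measurable [measurable]:
  "case_prod double_integrand \<in> borel_measurable (lborel \<Otimes>\<^sub>M lborel)"
  unfolding double_integrand_def artanh_def by measurable

lemma integrable_double_integrand_s: "integrable lborel (double_integrand x)"
  unfolding double_integrand_def
  by (rule integrable_mult_right)
    (use laplace_x2_exp_cos(1)[OF pi_gt_zero, of "2 * ln x"] in \<open>simp add: set_integrable_def\<close>)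

lemma integral_double_integrand_s:
  "(\<integral>s. double_integrand x s \<partial>lborel) = indicator {0<..<1} x *
     ((pi^3 - 12 * pi * (ln x)^2) * artanh x / (x * (4 * (ln x)^2 + pi^2)^3))"
proof -
  have half: "a / 2 * (2 * b / c) = a * (b / c)" for a b c :: real
    by simp
  have "(\<integral>s. double_integrand x s \<partial>lborel) = indicator {0<..<1} x * (artanh x / x) / 2 *
      (LBINT s:{0<..}. s^2 * exp (- (pi * s)) * cos (2 * ln x * s))"
    unfolding double_integrand_def set_lebesgue_integral_def real_scaleR_def
    by (rule integral_mult_right_zero)
  also have "\<dots> = indicator {0<..<1} x * (artanh x / x) / 2 *
      (2 * (pi^3 - 3 * pi * (2 * ln x)^2) / (pi^2 + (2 * ln x)^2)^3)"
    by (simp only: laplace_x2_exp_cos(2) pi_gt_zero)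
  also have "\<dots> = indicator {0<..<1} x * (artanh x / x) *
      ((pi^3 - 3 * pi * (2 * ln x)^2) / (pi^2 + (2 * ln x)^2)^3)"
    by (rule half)
  also have "\<dots> = indicator {0<..<1} x *
      ((pi^3 - 12 * pi * (ln x)^2) * artanh x / (x * (4 * (ln x)^2 + pi^2)^3))"
    by (simp add: power_mult_distrib add.commute mult_ac)
  finally show ?thesis .
qed

lemma norm_double_integrand_le:
  "norm (double_integrand x s) \<le>
     indicator {0<..<1} x * (artanh x / x) / 2 * (indicator {0<..} s * (s^2 * exp (- (pi * s))))"
    (is "_ \<le> ?A")
proof -
  have "?A \<ge> 0"
    by (auto simp: artanh_def split: split_indicator intro!: divide_nonneg_pos ln_ge_zero)
  have "norm (double_integrand x s) = norm (?A * cos (2 * ln x * s))"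
    by (simp add: double_integrand_def mult_ac)
  also have "\<dots> = ?A * \<bar>cos (2 * ln x * s)\<bar>"
    using \<open>?A \<ge> 0\<close> by (simp only: real_norm_def abs_mult[of ?A] abs_of_nonneg)
  also have "\<dots> \<le> ?A"
    by (rule mult_left_le[OF abs_cos_le_one \<open>?A \<ge> 0\<close>])
  finally show ?thesis .
qed

lemma integral_norm_double_integrand_s_le:
  "(\<integral>s. norm (double_integrand x s) \<partial>lborel) \<le> indicator {0<..<1} x * (artanh x / x) / pi^3"
proof -
  have "(\<integral>s. norm (double_integrand x s) \<partial>lborel) \<le>
      (\<integral>s. indicator {0<..<1} x * (artanh x / x) / 2 *
          (indicator {0<..} s * (s^2 * exp (- (pi * s)))) \<partial>lborel)"
  proof (rule integral_mono)
    show "integrable lborel (\<lambda>s. indicator {0<..<1} x * (artanh x / x) / 2 *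
          (indicator {0<..} s * (s^2 * exp (- (pi * s)))))"
      by (rule integrable_mult_right)
        (use laplace_x2_exp(1)[OF pi_gt_zero] in \<open>simp add: set_integrable_def\<close>)
  qed (use integrable_double_integrand_s norm_double_integrand_le in simp_all)
  also have "\<dots> = indicator {0<..<1} x * (artanh x / x) / pi^3"
    using laplace_x2_exp(2)[OF pi_gt_zero] by (simp add: set_lebesgue_integral_def)
  finally show ?thesis .
qed

lemma integrable_double_integrand:
  "integrable (lborel \<Otimes>\<^sub>M lborel) (case_prod double_integrand)"
proof (rule lborel_pair.Fubini_integrable)
  have "integrable lborel (\<lambda>x. indicator {0<..<1} x * (artanh x / x) / pi^3)"
    using integral_cos_ln_artanh_div(1)[of 0] unfolding set_integrable_def
    by (intro integrable_divide_zero) simp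
  then show "integrable lborel (\<lambda>x. \<integral>s. norm (case_prod double_integrand (x, s)) \<partial>lborel)"
  proof (rule Bochner_Integration.integrable_bound)
    show "AE x in lborel. norm (\<integral>s. norm (case_prod double_integrand (x, s)) \<partial>lborel) \<le>
        norm (indicator {0<..<1} x * (artanh x / x) / pi^3)"
    proof (rule AE_I2)
      fix x
      have "0 \<le> (\<integral>s. norm (double_integrand x s) \<partial>lborel)"
        by (rule integral_nonneg_AE) simp
      then show "norm (\<integral>s. norm (case_prod double_integrand (x, s)) \<partial>lborel) \<le>
          norm (indicator {0<..<1} x * (artanh x / x) / pi^3)"
        using integral_norm_double_integrand_s_le[of x] unfolding real_norm_def case_prod_conv
        by (metis abs_ge_self abs_of_nonneg order_trans)
    qed
  qed simp
qed (simp_all add: integrable_double_integrand_s)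

lemma integral_double_integrand_x:
  "(\<integral>x. double_integrand x s \<partial>lborel) =
     indicator {0<..} s * (pi / 16 * (s * (exp (- (pi * s)) * tanh (pi * s))))"
proof (cases "s > 0")
  case True
  have "(\<integral>x. double_integrand x s \<partial>lborel) =
      (\<integral>x. s^2 * exp (- (pi * s)) / 2 *
          (indicator {0<..<1} x * (cos ((2 * s) * ln x) * (artanh x / x))) \<partial>lborel)"
    using True unfolding double_integrand_def
    by (intro Bochner_Integration.integral_cong) (simp_all add: mult_ac)
  also have "\<dots> = s^2 * exp (- (pi * s)) / 2 *
      (LBINT x:{0<..<1}. cos ((2 * s) * ln x) * (artanh x / x))"
    unfolding set_lebesgue_integral_def real_scaleR_def by (rule integral_mult_right_zero)
  also have "(LBINT x:{0<..<1}. cos ((2 * s) * ln x) * (artanh x / x))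
      = pi * tanh (pi * s) / (8 * s)"
    using sums_unique2[OF integral_cos_ln_artanh_div(2) tanh_partial_fractions] True by simp
  finally show ?thesis
    using True by (simp add: power2_eq_square)
qed (simp add: double_integrand_def)

theorem mainTheorem11:
  shows "((\<lambda>x::real. (pi^3 - 12 * pi * (ln x)^2) * artanh x /
             (x * (4 * (ln x)^2 + pi^2)^3))
          has_integral ((2 * catalan - 1) / (16 * pi))) {0<..<1}"
proof -
  let ?h = "\<lambda>x::real. (pi^3 - 12 * pi * (ln x)^2) * artanh x / (x * (4 * (ln x)^2 + pi^2)^3)"
  have h_integrable: "set_integrable lborel {0<..<1} ?h"
    using lborel_pair.integrable_fst'[OF integrable_double_integrand]
    by (simp add: set_integrable_def integral_double_integrand_s)
  have "(LBINT x:{0<..<1}. ?h x) = (\<integral>x. \<integral>s. double_integrand x s \<partial>lborel \<partial>lborel)"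
    by (simp add: set_lebesgue_integral_def integral_double_integrand_s)
  also have "\<dots> = (\<integral>s. \<integral>x. double_integrand x s \<partial>lborel \<partial>lborel)"
    by (rule lborel_pair.Fubini_integral[symmetric, OF integrable_double_integrand])
  also have "\<dots> = (LBINT s:{0<..}. pi / 16 * (s * (exp (- (pi * s)) * tanh (pi * s))))"
    by (simp only: integral_double_integrand_x set_lebesgue_integral_def real_scaleR_def)
  also have "\<dots> = pi / 16 * (LBINT s:{0<..}. s * (exp (- (pi * s)) * tanh (pi * s)))"
    by (rule set_integral_mult_right)
  also have "\<dots> = (2 * catalan - 1) / (16 * pi)"
    by (simp add: integral_x_exp_tanh(2) power2_eq_square)
  finally have "(LBINT x:{0<..<1}. ?h x) = (2 * catalan - 1) / (16 * pi)" .
  with integrable_integral[OF set_borel_integral_eq_integral(1)[OF h_integrable]]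
  show ?thesis
    by (simp only: set_borel_integral_eq_integral(2)[OF h_integrable])
qed
end
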